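(* Let $n\ge2$ and let $U^+$ be the subalgebra of $U_{r,s}(\mathfrak{so}_{2n+1})$ generated by $e_1,\dots,e_n$, with root vectors $\mathcal E_{i,j},\mathcal E_{i,j'}$ as in the context. Then in $U^+$: (1) $\mathcal E_{i,j}\mathcal E_{k,l}=\mathcal E_{k,l}\mathcal E_{i,j}$ for $i\le j$, $j+1<k\le l\le n$; (2) $\mathcal E_{i,j}\mathcal E_{k,l'}=\mathcal E_{k,l'}\mathcal E_{i,j}$ for $i\le j$, $j+1<k<l\le n$; (3) $\mathcal E_{i,j}=\mathcal E_{i,l-1}\mathcal E_{l,j}-r^2\mathcal E_{l,j}\mathcal E_{i,l-1}$ for $i<l\le j\le n$; (4) $\mathcal E_{i,j'}=\mathcal E_{i,l-1}\mathcal E_{l,j'}-r^2\mathcal E_{l,j'}\mathcal E_{i,l-1}$ for $i<l<j\le n$.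
   Context: Let $r,s\in\mathbb C^*$ with $r^3\ne s^3$, $r^4\ne s^4$, $\mathbb K=\mathbb Q(r,s)$. $U_{r,s}(\mathfrak{so}_{2n+1})$ is the $\mathbb K$-algebra generated by $e_i,f_i,\omega_i^{\pm1},\omega_i'^{\pm1}$ ($1\le i\le n$) with: $\omega$'s commute, invertible; $\omega_je_i\omega_j^{-1}=\langle\omega_i',\omega_j\rangle e_i$, $\omega_jf_i\omega_j^{-1}=\langle\omega_i',\omega_j\rangle^{-1}f_i$, $\omega_j'e_i\omega_j'^{-1}=\langle\omega_j',\omega_i\rangle^{-1}e_i$, $\omega_j'f_i\omega_j'^{-1}=\langle\omega_j',\omega_i\rangle f_i$, where $\langle\omega_i',\omega_i\rangle=r^2s^{-2}$ ($i<n$), $\langle\omega_n',\omega_n\rangle=rs^{-1}$, $\langle\omega_i',\omega_{i+1}\rangle=r^{-2}$, $\langle\omega_{i+1}',\omega_i\rangle=s^2$ ($i<n$), others $1$; $e_if_j-f_je_i=\delta_{ij}(\omega_i-\omega_i')/(r_i-s_i)$ ($r_i=r^2,s_i=s^2$ for $i<n$; $r_n=r,s_n=s$); Serre relations $(\mathrm{ad}_le_i)^{1-a_{ij}}(e_j)=0=(\mathrm{ad}_rf_i)^{1-a_{ij}}(f_j)$, $i\ne j$, with $(a_{ij})$ the $B_n$ Cartan matrix ($a_{ii}=2$, $a_{i,i+1}=a_{i+1,i}=-1$ for $i\le n-2$, $a_{n-1,n}=-1$, $a_{n,n-1}=-2$, else $0$), $\mathrm{ad}_l(a)(b)=\sum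 a_{(1)}bS(a_{(2)})$, $\mathrm{ad}_r(a)(b)=\sum S(a_{(1)})ba_{(2)}$, for the Hopf structure $\Delta(\omega)=\omega\otimes\omega$, $\Delta(e_i)=e_i\otimes1+\omega_i\otimes e_i$, $\Delta(f_i)=1\otimes f_i+f_i\otimes\omega_i'$, $S(e_i)=-\omega_i^{-1}e_i$, $S(f_i)=-f_i\omega_i'^{-1}$. (In $U^+$ the Serre relations amount to: $e_ie_j=e_je_i$ for $|i-j|>1$, $e_i\mathcal E_{i,i+1}=s^2\mathcal E_{i,i+1}e_i$ for $i<n$, $\mathcal E_{j,j+1}e_{j+1}=s^2e_{j+1}\mathcal E_{j,j+1}$ for $j<n-1$, $\mathcal E_{n-1,n'}e_n=s^2e_n\mathcal E_{n-1,n'}$.) Root vectors: $\mathcal E_{i,i}=e_i$, $\mathcal E_{i,j}=e_i\mathcal E_{i+1,j}-r^2\mathcal E_{i+1,j}e_i$ ($1\le i<j\le n$), $\mathcal E_{i,n'}=\mathcal E_{i,n}e_n-rs\,e_n\mathcal E_{i,n}$ ($i\le n-1$), $\mathcal E_{i,j'}=\mathcal E_{i,(j+1)'}e_j-s^{-2}e_j\mathcal E_{i,(j+1)'}$ ($1\le i<j\le n-1$). *)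

theory Defs
  imports Complex_Main
begin

text \<open>Noncommutative polynomials in generators indexed by nat (words = nat lists),
  coefficients in complex (containing K = Q(r,s)).  Elements are coefficient functions.\<close>

type_synonym ncpoly = "nat list \<Rightarrow> complex"

definition np_add :: "ncpoly \<Rightarrow> ncpoly \<Rightarrow> ncpoly" (infixl "\<oplus>" 65) where
  "p \<oplus> q = (\<lambda>w. p w + q w)"

definition np_smult :: "complex \<Rightarrow> ncpoly \<Rightarrow> ncpoly" (infixr "\<cdot>" 75) where
  "c \<cdot> p = (\<lambda>w. c * p w)"

definition np_minus :: "ncpoly \<Rightarrow> ncpoly \<Rightarrow> ncpoly" (infixl "\<ominus>" 65) where
  "p \<ominus> q = (\<lambda>w. p w - q w)"

definition np_mult :: "ncpoly \<Rightarrow> ncpoly \<Rightarrow> ncpoly" (infixl "\<otimes>" 70) where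
  "p \<otimes> q = (\<lambda>w. \<Sum>k\<le>length w. p (take k w) * q (drop k w))"

definition np_word :: "nat list \<Rightarrow> ncpoly" where
  "np_word u = (\<lambda>w. if w = u then 1 else 0)"

definition np_zero :: ncpoly where "np_zero = (\<lambda>w. 0)"

definition gen :: "nat \<Rightarrow> ncpoly" where "gen i = np_word [i]"

text \<open>Eaux r j d = E_{j-d,j}; recursion E_{i,j} = e_i E_{i+1,j} - r^2 E_{i+1,j} e_i.\<close>
primrec Eaux :: "complex \<Rightarrow> nat \<Rightarrow> nat \<Rightarrow> ncpoly" where
  "Eaux r j 0 = gen j"
| "Eaux r j (Suc d) = (gen (j - Suc d) \<otimes> Eaux r j d) \<ominus> ((r^2) \<cdot> (Eaux r j d \<otimes> gen (j - Suc d)))"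

definition rootE :: "complex \<Rightarrow> nat \<Rightarrow> nat \<Rightarrow> ncpoly" where
  "rootE r i j = Eaux r j (j - i)"

text \<open>Epaux r s n i d = E_{i,(n-d)'};
  E_{i,n'} = E_{i,n} e_n - r s e_n E_{i,n},
  E_{i,j'} = E_{i,(j+1)'} e_j - s^{-2} e_j E_{i,(j+1)'}.\<close>
primrec Epaux :: "complex \<Rightarrow> complex \<Rightarrow> nat \<Rightarrow> nat \<Rightarrow> nat \<Rightarrow> ncpoly" where
  "Epaux r s n i 0 = (rootE r i n \<otimes> gen n) \<ominus> ((r * s) \<cdot> (gen n \<otimes> rootE r i n))"
| "Epaux r s n i (Suc d) = (Epaux r s n i d \<otimes> gen (n - Suc d))
      \<ominus> ((inverse (s^2)) \<cdot> (gen (n - Suc d) \<otimes> Epaux r s n i d))"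

definition rootEp :: "complex \<Rightarrow> complex \<Rightarrow> nat \<Rightarrow> nat \<Rightarrow> nat \<Rightarrow> ncpoly" where
  "rootEp r s n i j = Epaux r s n i (n - j)"

definition serre_rels :: "complex \<Rightarrow> complex \<Rightarrow> nat \<Rightarrow> ncpoly set" where
  "serre_rels r s n =
     {(gen i \<otimes> gen j) \<ominus> (gen j \<otimes> gen i) | i j. 1 \<le> i \<and> i \<le> n \<and> 1 \<le> j \<and> j \<le> n \<and> (i + 1 < j \<or> j + 1 < i)}
   \<union> {(gen i \<otimes> rootE r i (i+1)) \<ominus> ((s^2) \<cdot> (rootE r i (i+1) \<otimes> gen i)) | i. 1 \<le> i \<and> i < n}
   \<union> {(rootE r j (j+1) \<otimes> gen (j+1)) \<ominus> ((s^2) \<cdot> (gen (j+1) \<otimes> rootE r j (j+1))) | j. 1 \<le> j \<and> j + 1 < n}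
   \<union> {(rootEp r s n (n-1) n \<otimes> gen n) \<ominus> ((s^2) \<cdot> (gen n \<otimes> rootEp r s n (n-1) n))}"

inductive_set serre_ideal :: "complex \<Rightarrow> complex \<Rightarrow> nat \<Rightarrow> ncpoly set"
  for r s :: complex and n :: nat where
  rel: "x \<in> serre_rels r s n \<Longrightarrow> (np_word u \<otimes> x) \<otimes> np_word v \<in> serre_ideal r s n"
| zero: "np_zero \<in> serre_ideal r s n"
| add: "a \<in> serre_ideal r s n \<Longrightarrow> b \<in> serre_ideal r s n \<Longrightarrow> a \<oplus> b \<in> serre_ideal r s n"
| smult: "a \<in> serre_ideal r s n \<Longrightarrow> c \<cdot> a \<in> serre_ideal r s n"

definition eqU :: "complex \<Rightarrow> complex \<Rightarrow> nat \<Rightarrow> ncpoly \<Rightarrow> ncpoly \<Rightarrow> bool" where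
  "eqU r s n a b \<longleftrightarrow> a \<ominus> b \<in> serre_ideal r s n"

end

theory Submission imports Defs begin

text \<open>
  All four identities follow from the relations \<open>e\<^sub>i e\<^sub>j = e\<^sub>j e\<^sub>i\<close> for \<open>|i - j| > 1\<close>
  alone. Root vectors on disjoint, non-adjacent index intervals are polynomials in mutually
  commuting generators, which gives (1) and (2). For (3) and (4), write
  \<open>[a, b]\<^sub>p = a b - p b a\<close>; if \<open>a\<close> commutes with \<open>c\<close> then
  \<open>[[a, b]\<^sub>p, c]\<^sub>q = [a, [b, c]\<^sub>q]\<^sub>p\<close>. Peeling the generators \<open>e\<^sub>i, \<dots>, e\<^sub>l\<^sub>-\<^sub>1\<close>
  off the recursive definition of a root vector one at a time with this rule regroups it
  as \<open>[E(i, l-1), E(l, \<dots>)]\<^sub>p\<close> with \<open>p = r\<^sup>2\<close>.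
\<close>

lemma np_mult_Nil: "(p \<otimes> q) [] = p [] * q []"
  by (simp add: np_mult_def)

lemma np_mult_Cons: "(p \<otimes> q) (a # w) = p [] * q (a # w) + ((\<lambda>u. p (a # u)) \<otimes> q) w"
  unfolding np_mult_def by (simp only: length_Cons sum.atMost_Suc_shift) simp

lemma np_mult_linear_left: "((\<lambda>u. c * f u + g u) \<otimes> t) w = c * (f \<otimes> t) w + (g \<otimes> t) w"
  unfolding np_mult_def by (simp add: sum.distrib sum_distrib_left algebra_simps)

lemma np_mult_assoc: "(p \<otimes> q) \<otimes> t = p \<otimes> (q \<otimes> t)"
proof (rule ext)
  fix w show "((p \<otimes> q) \<otimes> t) w = (p \<otimes> (q \<otimes> t)) w"
    by (induction w arbitrary: p)
      (simp_all add: np_mult_Nil np_mult_Cons np_mult_linear_left algebra_simps)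
qed

lemma np_mult_diff_left: "(p \<ominus> q) \<otimes> t = (p \<otimes> t) \<ominus> (q \<otimes> t)"
  and np_mult_diff_right: "t \<otimes> (p \<ominus> q) = (t \<otimes> p) \<ominus> (t \<otimes> q)"
  and np_mult_add_left: "(p \<oplus> q) \<otimes> t = (p \<otimes> t) \<oplus> (q \<otimes> t)"
  and np_mult_add_right: "t \<otimes> (p \<oplus> q) = (t \<otimes> p) \<oplus> (t \<otimes> q)"
  and np_mult_smult_left: "(c \<cdot> p) \<otimes> t = c \<cdot> (p \<otimes> t)"
  and np_mult_smult_right: "t \<otimes> (c \<cdot> p) = c \<cdot> (t \<otimes> p)"
  and np_mult_zero_left: "np_zero \<otimes> t = np_zero"
  and np_mult_zero_right: "t \<otimes> np_zero = np_zero"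
  by (auto simp: fun_eq_iff np_mult_def np_minus_def np_add_def np_smult_def np_zero_def
      sum_subtractf sum.distrib sum_distrib_left algebra_simps)

lemma np_word_mult: "np_word u \<otimes> np_word v = np_word (u @ v)"
proof (rule ext)
  fix w
  have "(np_word u \<otimes> np_word v) w = (\<Sum>k\<le>length w. if w = u @ v \<and> k = length u then 1 else 0)"
    unfolding np_mult_def np_word_def
    by (rule sum.cong) (auto simp: append_eq_conv_conj simp flip: append_take_drop_id[of _ w])
  then show "(np_word u \<otimes> np_word v) w = np_word (u @ v) w"
    by (simp add: np_word_def)
qed

lemma np_word_Nil_mult: "np_word [] \<otimes> x = x"
proof (rule ext)
  fix w show "(np_word [] \<otimes> x) w = x w"
    using np_mult_zero_left
    by (cases w) (simp_all add: np_mult_Nil np_mult_Cons np_word_def np_zero_def)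
qed

lemma np_mult_word_Nil: "x \<otimes> np_word [] = x"
proof (rule ext)
  fix w
  have "(x \<otimes> np_word []) w = (\<Sum>k\<le>length w. if k = length w then x w else 0)"
    unfolding np_mult_def np_word_def by (rule sum.cong) auto
  then show "(x \<otimes> np_word []) w = x w" by simp
qed

text \<open>
  The ideal is closed under multiplication only by such polynomials: it is built from
  word multiples of relators, and an arbitrary coefficient function need not be a finite
  combination of words.
\<close>

inductive in_subalg :: "nat set \<Rightarrow> ncpoly \<Rightarrow> bool" for S where
  gen: "i \<in> S \<Longrightarrow> in_subalg S (gen i)"
| mult: "in_subalg S a \<Longrightarrow> in_subalg S b \<Longrightarrow> in_subalg S (a \<otimes> b)"
| diff: "in_subalg S a \<Longrightarrow> in_subalg S b \<Longrightarrow> in_subalg S (a \<ominus> b)"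
| smult: "in_subalg S a \<Longrightarrow> in_subalg S (c \<cdot> a)"

lemma in_subalg_mono: "in_subalg S a \<Longrightarrow> S \<subseteq> T \<Longrightarrow> in_subalg T a"
  by (induction rule: in_subalg.induct) (auto intro: in_subalg.intros)

lemma in_subalg_rootE: "i \<le> j \<Longrightarrow> in_subalg {i..j} (rootE r i j)"
proof -
  have "in_subalg {j - d..j} (Eaux r j d)" for d
  proof (induction d)
    case (Suc d)
    then have "in_subalg {j - Suc d..j} (Eaux r j d)" by (rule in_subalg_mono) auto
    then show ?case by (simp add: in_subalg.intros)
  qed (simp add: in_subalg.gen)
  from this[of "j - i"] show "i \<le> j \<Longrightarrow> ?thesis" by (simp add: rootE_def)
qed

lemma in_subalg_Epaux: "i \<le> n \<Longrightarrow> d \<le> n - i \<Longrightarrow> in_subalg {i..n} (Epaux r s n i d)"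
  by (induction d) (auto intro!: in_subalg.intros in_subalg_rootE)

lemma serre_ideal_diff:
  "a \<in> serre_ideal r s n \<Longrightarrow> b \<in> serre_ideal r s n \<Longrightarrow> a \<ominus> b \<in> serre_ideal r s n"
proof -
  have "a \<ominus> b = a \<oplus> ((-1) \<cdot> b)" by (simp add: fun_eq_iff np_minus_def np_add_def np_smult_def)
  then show "a \<in> serre_ideal r s n \<Longrightarrow> b \<in> serre_ideal r s n \<Longrightarrow> ?thesis"
    by (simp add: serre_ideal.add serre_ideal.smult)
qed

lemma serre_ideal_mult_word:
  "x \<in> serre_ideal r s n \<Longrightarrow>
     np_word u \<otimes> x \<in> serre_ideal r s n \<and> x \<otimes> np_word u \<in> serre_ideal r s n"
proof (induction rule: serre_ideal.induct)
  case (rel x u' v)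
  then show ?case
    using serre_ideal.rel[of x r s n "u @ u'" v] serre_ideal.rel[of x r s n u' "v @ u"]
    by (simp add: np_mult_assoc flip: np_word_mult)
qed (simp_all add: np_mult_zero_left np_mult_zero_right np_mult_add_left np_mult_add_right
       np_mult_smult_left np_mult_smult_right serre_ideal.intros)

lemma serre_ideal_mult_subalg:
  "in_subalg S a \<Longrightarrow> x \<in> serre_ideal r s n \<Longrightarrow>
     a \<otimes> x \<in> serre_ideal r s n \<and> x \<otimes> a \<in> serre_ideal r s n"
proof (induction arbitrary: x rule: in_subalg.induct)
  case (gen i) then show ?case by (simp add: gen_def serre_ideal_mult_word)
next
  case (mult a b) then show ?case by (metis np_mult_assoc)
next
  case (diff a b) then show ?case by (simp add: np_mult_diff_left np_mult_diff_right serre_ideal_diff)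
next
  case (smult a c) then show ?case by (simp add: np_mult_smult_left np_mult_smult_right serre_ideal.smult)
qed

lemma eqU_refl: "eqU r s n a a"
  using serre_ideal.zero by (simp add: eqU_def np_minus_def np_zero_def)

lemma eqU_sym: "eqU r s n a b \<Longrightarrow> eqU r s n b a"
proof -
  have "b \<ominus> a = (-1) \<cdot> (a \<ominus> b)" by (simp add: fun_eq_iff np_minus_def np_smult_def)
  then show "eqU r s n a b \<Longrightarrow> ?thesis" by (simp add: eqU_def serre_ideal.smult)
qed

lemma eqU_trans [trans]: "eqU r s n a b \<Longrightarrow> eqU r s n b c \<Longrightarrow> eqU r s n a c"
proof -
  have "a \<ominus> c = (a \<ominus> b) \<oplus> (b \<ominus> c)" by (simp add: fun_eq_iff np_minus_def np_add_def)
  then show "eqU r s n a b \<Longrightarrow> eqU r s n b c \<Longrightarrow> ?thesis" by (simp add: eqU_def serre_ideal.add)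
qed

lemma eqU_diff: "eqU r s n a a' \<Longrightarrow> eqU r s n b b' \<Longrightarrow> eqU r s n (a \<ominus> b) (a' \<ominus> b')"
proof -
  have "(a \<ominus> b) \<ominus> (a' \<ominus> b') = (a \<ominus> a') \<ominus> (b \<ominus> b')" by (simp add: fun_eq_iff np_minus_def)
  then show "eqU r s n a a' \<Longrightarrow> eqU r s n b b' \<Longrightarrow> ?thesis" by (simp add: eqU_def serre_ideal_diff)
qed

lemma eqU_smult: "eqU r s n a b \<Longrightarrow> eqU r s n (c \<cdot> a) (c \<cdot> b)"
proof -
  have "(c \<cdot> a) \<ominus> (c \<cdot> b) = c \<cdot> (a \<ominus> b)" by (simp add: fun_eq_iff np_minus_def np_smult_def algebra_simps)
  then show "eqU r s n a b \<Longrightarrow> ?thesis" by (simp add: eqU_def serre_ideal.smult)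
qed

lemma eqU_mult_left: "in_subalg S c \<Longrightarrow> eqU r s n a b \<Longrightarrow> eqU r s n (c \<otimes> a) (c \<otimes> b)"
  and eqU_mult_right: "in_subalg S c \<Longrightarrow> eqU r s n a b \<Longrightarrow> eqU r s n (a \<otimes> c) (b \<otimes> c)"
  unfolding eqU_def by (simp_all add: serre_ideal_mult_subalg flip: np_mult_diff_left np_mult_diff_right)

lemma eqU_gen_commute:
  assumes "1 \<le> i" "i \<le> n" "1 \<le> j" "j \<le> n" "i + 1 < j \<or> j + 1 < i"
  shows "eqU r s n (gen i \<otimes> gen j) (gen j \<otimes> gen i)"
proof -
  have "(gen i \<otimes> gen j) \<ominus> (gen j \<otimes> gen i) \<in> serre_rels r s n"
    unfolding serre_rels_def using assms by blast
  from serre_ideal.rel[OF this, of "[]" "[]"] show ?thesis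
    by (simp add: eqU_def np_word_Nil_mult np_mult_word_Nil)
qed

lemma eqU_commute_subalg_left:
  assumes "in_subalg S a" "in_subalg T c" "\<forall>i\<in>S. eqU r s n (gen i \<otimes> c) (c \<otimes> gen i)"
  shows "eqU r s n (a \<otimes> c) (c \<otimes> a)"
  using assms(1,3)
proof (induction rule: in_subalg.induct)
  case (mult a b)
  have "eqU r s n ((a \<otimes> b) \<otimes> c) (a \<otimes> (c \<otimes> b))"
    unfolding np_mult_assoc using mult by (intro eqU_mult_left) auto
  also have "eqU r s n (a \<otimes> (c \<otimes> b)) ((c \<otimes> a) \<otimes> b)"
    unfolding np_mult_assoc[symmetric] using mult assms(2) by (intro eqU_mult_right) auto
  finally show ?case by (simp add: np_mult_assoc)
next
  case (diff a b)
  then show ?case using eqU_diff by (fastforce simp: np_mult_diff_left np_mult_diff_right)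
next
  case (smult a k)
  then show ?case using eqU_smult by (fastforce simp: np_mult_smult_left np_mult_smult_right)
qed simp

lemma eqU_commute_subalg:
  assumes a: "in_subalg S a" and c: "in_subalg T c"
    and gens: "\<forall>i\<in>S. \<forall>j\<in>T. eqU r s n (gen i \<otimes> gen j) (gen j \<otimes> gen i)"
  shows "eqU r s n (a \<otimes> c) (c \<otimes> a)"
proof -
  have "eqU r s n (c \<otimes> gen i) (gen i \<otimes> c)" if "i \<in> S" for i
    using c in_subalg.gen[of i "{i}"] gens that
    by (intro eqU_commute_subalg_left) (auto intro: eqU_sym)
  then show ?thesis using a c by (intro eqU_commute_subalg_left) (auto intro: eqU_sym)
qed

lemma eqU_commute_rootE:
  assumes "1 \<le> i" "i \<le> j" "j + 1 < k" "in_subalg {k..n} c"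
  shows "eqU r s n (rootE r i j \<otimes> c) (c \<otimes> rootE r i j)"
  using in_subalg_rootE[of i j r] assms
  by (intro eqU_commute_subalg[where S = "{i..j}" and T = "{k..n}"]) (auto intro!: eqU_gen_commute)

definition qcomm :: "complex \<Rightarrow> ncpoly \<Rightarrow> ncpoly \<Rightarrow> ncpoly" where
  "qcomm p a b = (a \<otimes> b) \<ominus> (p \<cdot> (b \<otimes> a))"

lemma eqU_qcomm_cong_left: "in_subalg S b \<Longrightarrow> eqU r s n a a' \<Longrightarrow> eqU r s n (qcomm p a b) (qcomm p a' b)"
  and eqU_qcomm_cong_right: "in_subalg S a \<Longrightarrow> eqU r s n b b' \<Longrightarrow> eqU r s n (qcomm p a b) (qcomm p a b')"
  unfolding qcomm_def by (intro eqU_diff eqU_smult eqU_mult_left eqU_mult_right; assumption)+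

lemma qcomm_qcomm_diff:
  "qcomm q (qcomm p a b) c \<ominus> qcomm p a (qcomm q b c)
     = (q \<cdot> (((a \<otimes> c) \<ominus> (c \<otimes> a)) \<otimes> b)) \<ominus> (p \<cdot> (b \<otimes> ((a \<otimes> c) \<ominus> (c \<otimes> a))))"
  unfolding qcomm_def
  by (simp only: np_mult_diff_left np_mult_diff_right np_mult_smult_left np_mult_smult_right np_mult_assoc)
    (simp add: fun_eq_iff np_minus_def np_smult_def algebra_simps)

lemma eqU_qcomm_assoc:
  assumes "in_subalg S b" "eqU r s n (a \<otimes> c) (c \<otimes> a)"
  shows "eqU r s n (qcomm q (qcomm p a b) c) (qcomm p a (qcomm q b c))"
  using assms unfolding eqU_def qcomm_qcomm_diff
  by (intro serre_ideal_diff serre_ideal.smult) (simp_all add: serre_ideal_mult_subalg)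

lemma rootE_self: "rootE r i i = gen i"
  by (simp add: rootE_def)

lemma rootE_Suc: "i < j \<Longrightarrow> rootE r i j = qcomm (r^2) (gen i) (rootE r (Suc i) j)"
proof -
  assume "i < j"
  then have "j - i = Suc (j - Suc i)" "j - Suc (j - Suc i) = i" by simp_all
  then show ?thesis by (simp only: rootE_def Eaux.simps qcomm_def)
qed

lemma Epaux_0: "Epaux r s n i 0 = qcomm (r * s) (rootE r i n) (gen n)"
  and Epaux_Suc: "Epaux r s n i (Suc d) = qcomm (inverse (s^2)) (Epaux r s n i d) (gen (n - Suc d))"
  by (simp_all add: qcomm_def)

declare Epaux.simps [simp del]

lemma eqU_rootE_split:
  "1 \<le> i \<Longrightarrow> i < l \<Longrightarrow> l \<le> j \<Longrightarrow> j \<le> n \<Longrightarrow>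
     eqU r s n (rootE r i j) (qcomm (r^2) (rootE r i (l - 1)) (rootE r l j))"
proof (induction "l - Suc i" arbitrary: i)
  case 0
  then have "l = Suc i" by simp
  with 0 show ?case by (simp add: rootE_Suc rootE_self eqU_refl)
next
  case (Suc d)
  then have "Suc i < l" by simp
  have "eqU r s n (rootE r (Suc i) j) (qcomm (r^2) (rootE r (Suc i) (l - 1)) (rootE r l j))"
    using Suc by auto
  then have "eqU r s n (rootE r i j)
      (qcomm (r^2) (gen i) (qcomm (r^2) (rootE r (Suc i) (l - 1)) (rootE r l j)))"
    using Suc.prems by (simp add: rootE_Suc eqU_qcomm_cong_right[OF in_subalg.gen[of i "{i}"]])
  also have "eqU r s n (gen i \<otimes> rootE r l j) (rootE r l j \<otimes> gen i)"
    using Suc.prems \<open>Suc i < l\<close> in_subalg_rootE[of l j r] in_subalg.gen[of i "{i}"]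
    by (intro eqU_commute_subalg) (auto intro!: eqU_gen_commute)
  then have "eqU r s n (qcomm (r^2) (gen i) (qcomm (r^2) (rootE r (Suc i) (l - 1)) (rootE r l j)))
      (qcomm (r^2) (rootE r i (l - 1)) (rootE r l j))"
    using \<open>Suc i < l\<close> by (simp add: rootE_Suc eqU_sym eqU_qcomm_assoc[OF in_subalg_rootE])
  finally show ?case .
qed

lemma eqU_Epaux_split:
  "1 \<le> i \<Longrightarrow> i < l \<Longrightarrow> l + d < n \<Longrightarrow>
     eqU r s n (Epaux r s n i d) (qcomm (r^2) (rootE r i (l - 1)) (Epaux r s n l d))"
proof (induction d)
  case 0
  have "eqU r s n (rootE r i (l - 1) \<otimes> gen n) (gen n \<otimes> rootE r i (l - 1))"
    using 0 in_subalg.gen[of n "{n}"] by (intro eqU_commute_rootE[where k = n]) auto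
  then have "eqU r s n (qcomm (r * s) (qcomm (r^2) (rootE r i (l - 1)) (rootE r l n)) (gen n))
                       (qcomm (r^2) (rootE r i (l - 1)) (Epaux r s n l 0))"
    using 0 by (simp add: Epaux_0 eqU_qcomm_assoc[OF in_subalg_rootE])
  moreover have "eqU r s n (rootE r i n) (qcomm (r^2) (rootE r i (l - 1)) (rootE r l n))"
    using 0 by (intro eqU_rootE_split) auto
  ultimately show ?case
    by (auto simp: Epaux_0 intro: eqU_trans eqU_qcomm_cong_left in_subalg.gen)
next
  case (Suc d)
  define m where "m = n - Suc d"
  have "eqU r s n (rootE r i (l - 1) \<otimes> gen m) (gen m \<otimes> rootE r i (l - 1))"
    using Suc.prems in_subalg.gen[of m "{m..n}"] by (intro eqU_commute_rootE[where k = m]) (auto simp: m_def)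
  then have "eqU r s n (qcomm (inverse (s^2)) (qcomm (r^2) (rootE r i (l - 1)) (Epaux r s n l d)) (gen m))
                       (qcomm (r^2) (rootE r i (l - 1)) (Epaux r s n l (Suc d)))"
    using Suc.prems by (simp add: Epaux_Suc m_def eqU_qcomm_assoc[OF in_subalg_Epaux])
  moreover have "eqU r s n (Epaux r s n i d) (qcomm (r^2) (rootE r i (l - 1)) (Epaux r s n l d))"
    using Suc by auto
  ultimately show ?case
    by (auto simp: m_def Epaux_Suc intro: eqU_trans eqU_qcomm_cong_left in_subalg.gen)
qed

theorem lemma3p1:
  fixes r s :: complex and n :: nat
  assumes "r \<noteq> 0" and "s \<noteq> 0" and "r^3 \<noteq> s^3" and "r^4 \<noteq> s^4" and "n \<ge> 2"
  shows "(\<forall>i j k l. 1 \<le> i \<and> i \<le> j \<and> j + 1 < k \<and> k \<le> l \<and> l \<le> n \<longrightarrow>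
            eqU r s n (rootE r i j \<otimes> rootE r k l) (rootE r k l \<otimes> rootE r i j))
       \<and> (\<forall>i j k l. 1 \<le> i \<and> i \<le> j \<and> j + 1 < k \<and> k < l \<and> l \<le> n \<longrightarrow>
            eqU r s n (rootE r i j \<otimes> rootEp r s n k l) (rootEp r s n k l \<otimes> rootE r i j))
       \<and> (\<forall>i l j. 1 \<le> i \<and> i < l \<and> l \<le> j \<and> j \<le> n \<longrightarrow>
            eqU r s n (rootE r i j)
              ((rootE r i (l - 1) \<otimes> rootE r l j) \<ominus> ((r^2) \<cdot> (rootE r l j \<otimes> rootE r i (l - 1)))))
       \<and> (\<forall>i l j. 1 \<le> i \<and> i < l \<and> l < j \<and> j \<le> n \<longrightarrow>
            eqU r s n (rootEp r s n i j)
              ((rootE r i (l - 1) \<otimes> rootEp r s n l j) \<ominus> ((r^2) \<cdot> (rootEp r s n l j \<otimes> rootE r i (l - 1)))))"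
proof (intro conjI allI impI; elim conjE)
  fix i j k l :: nat
  assume "1 \<le> i" "i \<le> j" "j + 1 < k" "k \<le> l" "l \<le> n"
  then show "eqU r s n (rootE r i j \<otimes> rootE r k l) (rootE r k l \<otimes> rootE r i j)"
    by (intro eqU_commute_rootE[where k = k] in_subalg_mono[OF in_subalg_rootE]) auto
next
  fix i j k l :: nat
  assume "1 \<le> i" "i \<le> j" "j + 1 < k" "k < l" "l \<le> n"
  then show "eqU r s n (rootE r i j \<otimes> rootEp r s n k l) (rootEp r s n k l \<otimes> rootE r i j)"
    unfolding rootEp_def by (intro eqU_commute_rootE[where k = k] in_subalg_Epaux) auto
next
  fix i l j :: nat
  assume "1 \<le> i" "i < l" "l \<le> j" "j \<le> n"
  then show "eqU r s n (rootE r i j)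
      ((rootE r i (l - 1) \<otimes> rootE r l j) \<ominus> ((r^2) \<cdot> (rootE r l j \<otimes> rootE r i (l - 1))))"
    using eqU_rootE_split by (simp add: qcomm_def)
next
  fix i l j :: nat
  assume "1 \<le> i" "i < l" "l < j" "j \<le> n"
  then show "eqU r s n (rootEp r s n i j)
      ((rootE r i (l - 1) \<otimes> rootEp r s n l j) \<ominus> ((r^2) \<cdot> (rootEp r s n l j \<otimes> rootE r i (l - 1))))"
    using eqU_Epaux_split[of i l "n - j" n r s] by (simp add: rootEp_def qcomm_def)
qed

end
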